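(* Let $\mathcal G=(\mathcal V,\mathcal E,W)$ be a network, $h\in\mathbb{R}^{\mathcal V}$, and consider the SNC game with binary actions on $\mathcal G$ with external field $h$. If $\mathcal G$ is structurally balanced, then the set $\mathcal N$ of Nash equilibria is globally BR-reachable.
   Context: A network is a triple $\mathcal G=(\mathcal V,\mathcal E,W)$ where $\mathcal V$ is a finite nonempty set, $\mathcal E\subseteq\mathcal V\times\mathcal V$, and $W\in\mathbb{R}^{\mathcal V\times\mathcal V}$ has zero diagonal and satisfies $W_{ij}\neq0$ iff $(i,j)\in\mathcal E$ (weights may have either sign). It is structurally balanced if $\mathcal V$ can be written as a disjoint union $\mathcal V_1\cup\mathcal V_2$ with $W_{ij}\ge0$ whenever $i,j$ lie in the same part and $W_{ij}\le0$ whenever they lie in different parts. The SNC game with binary actions on $\mathcal G$ with external field $h\in\mathbb{R}^{\mathcal V}$ has player set $\mathcal V$, action set $\{-1,+1\}$ for each player, strategy profiles $\mathcal X=\{\pm1\}^{\mathcal V}$, and utilities $u_i(x)=h_ix_i+x_i\sum_{j\in\mathcal V}W_{ij}x_j$. Best responses $\mathcal B_i(x_{-i})=\arg\max_{x_i\in\{\pm1\}}u_i(x_i,x_{-i})$; Nash equilibrium: $x^*_i\in\mathcal B_i(x^*_{-i})$ for all $i$. A BR-path of length $l\ge0$ from $x$ to $y$ is a sequence $x^{(0)}=x,\dots,x^{(l)}=y$ such that for each $k$ some player $i_k$ has $x^{(k)}_{-i_k}=x^{(k-1)}_{-i_k}$ and $x^{(k)}_{i_k}\in\mathcal B_{i_k}(x^{(k-1)}_{-i_k})\setminus\{x^{(k-1)}_{i_k}\}$.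 A set $\mathcal X^*\subseteq\mathcal X$ is globally BR-reachable if from every profile there is a BR-path to some element of $\mathcal X^*$. *)

theory Defs
  imports Complex_Main
begin

text \<open>A network (V, E, W): finite nonempty vertex set V, weight matrix W on V x V with
  zero diagonal; the edge set is E = {(i,j). W i j ~= 0}, determined by W.
  W is taken to vanish outside V x V.\<close>
definition network :: "'v set \<Rightarrow> ('v \<Rightarrow> 'v \<Rightarrow> real) \<Rightarrow> bool" where
  "network V W \<longleftrightarrow> finite V \<and> V \<noteq> {} \<and> (\<forall>i. W i i = 0)
     \<and> (\<forall>i j. W i j \<noteq> 0 \<longrightarrow> i \<in> V \<and> j \<in> V)"

definition edges :: "'v set \<Rightarrow> ('v \<Rightarrow> 'v \<Rightarrow> real) \<Rightarrow> ('v \<times> 'v) set" where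
  "edges V W = {(i,j). i \<in> V \<and> j \<in> V \<and> W i j \<noteq> 0}"

definition structurally_balanced :: "'v set \<Rightarrow> ('v \<Rightarrow> 'v \<Rightarrow> real) \<Rightarrow> bool" where
  "structurally_balanced V W \<longleftrightarrow> (\<exists>V1 V2. V1 \<union> V2 = V \<and> V1 \<inter> V2 = {} \<and>
     (\<forall>i\<in>V. \<forall>j\<in>V. ((i \<in> V1 \<longleftrightarrow> j \<in> V1) \<longrightarrow> W i j \<ge> 0)
                  \<and> ((i \<in> V1 \<longleftrightarrow> j \<notin> V1) \<longrightarrow> W i j \<le> 0)))"

definition profiles :: "'v set \<Rightarrow> ('v \<Rightarrow> real) set" where
  "profiles V = {x. (\<forall>i\<in>V. x i = 1 \<or> x i = -1) \<and> (\<forall>i. i \<notin> V \<longrightarrow> x i = 0)}"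

definition utility :: "'v set \<Rightarrow> ('v \<Rightarrow> 'v \<Rightarrow> real) \<Rightarrow> ('v \<Rightarrow> real) \<Rightarrow> 'v \<Rightarrow> ('v \<Rightarrow> real) \<Rightarrow> real" where
  "utility V W h i x = h i * x i + x i * (\<Sum>j\<in>V. W i j * x j)"

definition best_responses :: "'v set \<Rightarrow> ('v \<Rightarrow> 'v \<Rightarrow> real) \<Rightarrow> ('v \<Rightarrow> real) \<Rightarrow> 'v \<Rightarrow> ('v \<Rightarrow> real) \<Rightarrow> real set" where
  "best_responses V W h i x = {a \<in> {-1, 1}. \<forall>b \<in> {-1, 1}.
      utility V W h i (x(i := b)) \<le> utility V W h i (x(i := a))}"

definition nash_equilibria :: "'v set \<Rightarrow> ('v \<Rightarrow> 'v \<Rightarrow> real) \<Rightarrow> ('v \<Rightarrow> real) \<Rightarrow> ('v \<Rightarrow> real) set" where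
  "nash_equilibria V W h = {x \<in> profiles V. \<forall>i\<in>V. x i \<in> best_responses V W h i x}"

definition br_step :: "'v set \<Rightarrow> ('v \<Rightarrow> 'v \<Rightarrow> real) \<Rightarrow> ('v \<Rightarrow> real) \<Rightarrow> ('v \<Rightarrow> real) \<Rightarrow> ('v \<Rightarrow> real) \<Rightarrow> bool" where
  "br_step V W h x y \<longleftrightarrow> (\<exists>i\<in>V. \<exists>a. a \<in> best_responses V W h i x \<and> a \<noteq> x i \<and> y = x(i := a))"

definition br_path :: "'v set \<Rightarrow> ('v \<Rightarrow> 'v \<Rightarrow> real) \<Rightarrow> ('v \<Rightarrow> real) \<Rightarrow> nat \<Rightarrow> (nat \<Rightarrow> ('v \<Rightarrow> real)) \<Rightarrow> bool" where
  "br_path V W h l p \<longleftrightarrow> (\<forall>k<l. br_step V W h (p k) (p (Suc k)))"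

definition globally_BR_reachable :: "'v set \<Rightarrow> ('v \<Rightarrow> 'v \<Rightarrow> real) \<Rightarrow> ('v \<Rightarrow> real) \<Rightarrow> ('v \<Rightarrow> real) set \<Rightarrow> bool" where
  "globally_BR_reachable V W h S \<longleftrightarrow> (\<forall>x \<in> profiles V. \<exists>l p. br_path V W h l p \<and> p 0 = x \<and> p l \<in> S)"

end

theory Submission
  imports Defs
begin

text \<open>Write \<open>F\<^sub>i(x) = h\<^sub>i + \<Sum>\<^sub>j W\<^sub>i\<^sub>j x\<^sub>j\<close> for the local field of player \<open>i\<close>; since \<open>W\<^sub>i\<^sub>i = 0\<close> it does not
  depend on \<open>x\<^sub>i\<close>, and \<open>a\<close> is a best response iff \<open>a F\<^sub>i(x) \<ge> 0\<close>. Structural balance gives signs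
  \<open>s\<close> with \<open>s\<^sub>i s\<^sub>j W\<^sub>i\<^sub>j \<ge> 0\<close>, so switching a player to \<open>s\<^sub>i\<close> can only raise \<open>s\<^sub>j F\<^sub>j\<close> for the others.
  First let players with \<open>x\<^sub>i = s\<^sub>i\<close> who strictly prefer \<open>-s\<^sub>i\<close> switch, until every player at its
  sign is content; each move lowers the number of players at their sign. Then let players at
  \<open>-s\<^sub>i\<close> for whom \<open>s\<^sub>i\<close> is a best response switch: by the monotonicity above the players at
  their sign stay content, and each move lowers the number of players at \<open>-s\<^sub>i\<close>. When no
  such move is left, every player plays a best response.\<close>

definition local_field :: "'v set \<Rightarrow> ('v \<Rightarrow> 'v \<Rightarrow> real) \<Rightarrow> ('v \<Rightarrow> real) \<Rightarrow> ('v \<Rightarrow> real) \<Rightarrow> 'v \<Rightarrow> real" where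
  "local_field V W h x i = h i + (\<Sum>j\<in>V. W i j * x j)"

definition balancing_signs :: "('v \<Rightarrow> 'v \<Rightarrow> real) \<Rightarrow> ('v \<Rightarrow> real) \<Rightarrow> bool" where
  "balancing_signs W s \<longleftrightarrow> (\<forall>i. s i = 1 \<or> s i = -1) \<and> (\<forall>i j. 0 \<le> s i * s j * W i j)"

definition content_at_signs ::
    "'v set \<Rightarrow> ('v \<Rightarrow> 'v \<Rightarrow> real) \<Rightarrow> ('v \<Rightarrow> real) \<Rightarrow> ('v \<Rightarrow> real) \<Rightarrow> ('v \<Rightarrow> real) \<Rightarrow> bool" where
  "content_at_signs V W h s x \<longleftrightarrow> (\<forall>i\<in>V. x i = s i \<longrightarrow> 0 \<le> s i * local_field V W h x i)"

lemma utility_fun_upd: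
  assumes "W i i = 0"
  shows "utility V W h i (x(i := b)) = b * local_field V W h x i"
proof -
  have "(\<Sum>j\<in>V. W i j * (x(i := b)) j) = (\<Sum>j\<in>V. W i j * x j)"
    by (rule sum.cong) (auto simp: assms)
  then show ?thesis
    unfolding utility_def local_field_def by (simp add: algebra_simps)
qed

lemma best_responses_iff:
  assumes "W i i = 0"
  shows "a \<in> best_responses V W h i x \<longleftrightarrow> (a = 1 \<or> a = -1) \<and> 0 \<le> a * local_field V W h x i"
proof -
  have "a \<in> best_responses V W h i x \<longleftrightarrow> (a = 1 \<or> a = -1) \<and>
      (\<forall>b\<in>{-1, 1}. b * local_field V W h x i \<le> a * local_field V W h x i)"
    unfolding best_responses_def by (auto simp: utility_fun_upd[of W i, OF assms])
  then show ?thesis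
    by (cases "a = 1"; cases "a = -1") auto
qed

lemma local_field_fun_upd:
  assumes "finite V" "i \<in> V"
  shows "local_field V W h (x(i := b)) j = local_field V W h x j + W j i * (b - x i)"
proof -
  have "(\<Sum>k\<in>V. W j k * (x(i := b)) k) - (\<Sum>k\<in>V. W j k * x k)
      = (\<Sum>k\<in>V. if k = i then W j i * (b - x i) else 0)"
    unfolding sum_subtractf[symmetric] by (rule sum.cong) (auto simp: algebra_simps)
  also have "\<dots> = W j i * (b - x i)"
    using assms by simp
  finally show ?thesis
    unfolding local_field_def by simp
qed

lemma flip_in_profiles:
  assumes "x \<in> profiles V" "i \<in> V"
  shows "x(i := - x i) \<in> profiles V"
  using assms by (auto simp: profiles_def)

lemma br_step_flip:
  assumes "\<forall>i. W i i = 0" "x \<in> profiles V" "i \<in> V" "0 \<le> - x i * local_field V W h x i"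
  shows "br_step V W h x (x(i := - x i))"
proof -
  have "x i = 1 \<or> x i = -1"
    using assms(2,3) by (simp add: profiles_def)
  then have "- x i \<in> best_responses V W h i x" "- x i \<noteq> x i"
    using assms(4) by (auto simp: best_responses_iff assms(1))
  then show ?thesis
    unfolding br_step_def using assms(3) by blast
qed

lemma card_agreeing_flip_less:
  fixes x t :: "'v \<Rightarrow> real"
  assumes "finite V" "i \<in> V" "x i = t i" "x i \<noteq> 0"
  shows "card {j\<in>V. (x(i := - x i)) j = t j} < card {j\<in>V. x j = t j}"
proof (rule psubset_card_mono)
  have "i \<in> {j\<in>V. x j = t j}" "i \<notin> {j\<in>V. (x(i := - x i)) j = t j}"
    using assms(2-4) by auto
  then show "{j\<in>V. (x(i := - x i)) j = t j} \<subset> {j\<in>V. x j = t j}"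
    by auto
qed (use assms(1) in simp)

lemma br_path_of_rtranclp:
  assumes "(br_step V W h)\<^sup>*\<^sup>* x y"
  shows "\<exists>l p. br_path V W h l p \<and> p 0 = x \<and> p l = y"
  using assms
proof (induction rule: converse_rtranclp_induct)
  case base
  have "br_path V W h 0 (\<lambda>_. y)"
    by (simp add: br_path_def)
  then show ?case by blast
next
  case (step x z)
  then obtain l p where p: "br_path V W h l p" "p 0 = z" "p l = y"
    by blast
  define q where "q k = (if k = 0 then x else p (k - 1))" for k
  have "br_path V W h (Suc l) q"
    unfolding br_path_def
  proof (intro allI impI)
    fix k assume "k < Suc l"
    then show "br_step V W h (q k) (q (Suc k))"
      using step p by (cases k) (auto simp: q_def br_path_def)
  qed
  moreover have "q 0 = x" "q (Suc l) = y"
    using p by (auto simp: q_def)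
  ultimately show ?case by blast
qed

lemma structurally_balanced_balancing_signs:
  assumes "network V W" "structurally_balanced V W"
  obtains s where "balancing_signs W s"
proof -
  obtain V1 where bal: "\<forall>i\<in>V. \<forall>j\<in>V. ((i \<in> V1 \<longleftrightarrow> j \<in> V1) \<longrightarrow> W i j \<ge> 0)
                  \<and> ((i \<in> V1 \<longleftrightarrow> j \<notin> V1) \<longrightarrow> W i j \<le> 0)"
    using assms(2) unfolding structurally_balanced_def by blast
  define s where "s i = (if i \<in> V1 then 1 else (-1::real))" for i
  have "0 \<le> s i * s j * W i j" for i j
  proof (cases "i \<in> V \<and> j \<in> V")
    case True
    then show ?thesis using bal by (auto simp: s_def)
  next
    case False
    then have "W i j = 0"
      using assms(1) by (auto simp: network_def)
    then show ?thesis by simp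
  qed
  then have "balancing_signs W s"
    by (simp add: balancing_signs_def s_def)
  then show thesis by (rule that)
qed

lemma reach_content_at_signs:
  assumes "finite V" "\<forall>i. W i i = 0" "\<forall>i. s i = 1 \<or> s i = -1" "x \<in> profiles V"
  shows "\<exists>y. (br_step V W h)\<^sup>*\<^sup>* x y \<and> y \<in> profiles V \<and> content_at_signs V W h s y"
  using assms(4)
proof (induction "card {i\<in>V. x i = s i}" arbitrary: x rule: less_induct)
  case less
  show ?case
  proof (cases "content_at_signs V W h s x")
    case True
    with less.prems show ?thesis by blast
  next
    case False
    then obtain i where i: "i \<in> V" "x i = s i" "s i * local_field V W h x i < 0"
      unfolding content_at_signs_def by force
    have "x i \<noteq> 0"
      using i(2) assms(3) by (metis zero_neq_neg_one zero_neq_one)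
    have "br_step V W h x (x(i := - x i))"
      using i by (intro br_step_flip assms(2) less.prems) auto
    moreover obtain y where "(br_step V W h)\<^sup>*\<^sup>* (x(i := - x i)) y"
        "y \<in> profiles V" "content_at_signs V W h s y"
      using less.hyps[OF card_agreeing_flip_less[of V i x s, OF assms(1) i(1,2) \<open>x i \<noteq> 0\<close>]]
        flip_in_profiles[OF less.prems i(1)] by blast
    ultimately show ?thesis
      by (meson converse_rtranclp_into_rtranclp)
  qed
qed

lemma content_at_signs_flip_to_sign:
  assumes "finite V" "\<forall>i. W i i = 0" "balancing_signs W s" "content_at_signs V W h s x"
    and "i \<in> V" "x i = - s i" "0 \<le> s i * local_field V W h x i"
  shows "content_at_signs V W h s (x(i := s i))"
  unfolding content_at_signs_def
proof (intro ballI impI)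
  fix j assume "j \<in> V" and j_at_sign: "(x(i := s i)) j = s j"
  have field: "local_field V W h (x(i := s i)) j = local_field V W h x j + W j i * (2 * s i)"
    using assms(6) by (simp add: local_field_fun_upd[OF assms(1,5)])
  show "0 \<le> s j * local_field V W h (x(i := s i)) j"
  proof (cases "j = i")
    case True
    then show ?thesis using field assms(2,7) by simp
  next
    case False
    then have "0 \<le> s j * local_field V W h x j"
      using assms(4) \<open>j \<in> V\<close> j_at_sign by (simp add: content_at_signs_def)
    moreover have "0 \<le> s j * s i * W j i"
      using assms(3) by (simp add: balancing_signs_def)
    ultimately show ?thesis
      using field by (simp add: algebra_simps)
  qed
qed

lemma reach_nash_from_content_at_signs:
  assumes "finite V" "\<forall>i. W i i = 0" "balancing_signs W s"
    and "x \<in> profiles V" "content_at_signs V W h s x"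
  shows "\<exists>y. (br_step V W h)\<^sup>*\<^sup>* x y \<and> y \<in> nash_equilibria V W h"
  using assms(4,5)
proof (induction "card {i\<in>V. x i = - s i}" arbitrary: x rule: less_induct)
  case less
  have signs: "s i = 1 \<or> s i = -1" for i
    using assms(3) by (simp add: balancing_signs_def)
  show ?case
  proof (cases "\<exists>i\<in>V. x i = - s i \<and> 0 \<le> s i * local_field V W h x i")
    case False
    have "x i \<in> best_responses V W h i x" if "i \<in> V" for i
    proof -
      have "x i = s i \<or> x i = - s i"
        using less.prems(1) that signs[of i] by (auto simp: profiles_def)
      then show ?thesis
        using False less.prems(2) that signs[of i]
        by (auto simp: best_responses_iff assms(2) content_at_signs_def)
    qed
    then have "x \<in> nash_equilibria V W h"
      using less.prems(1) by (simp add: nash_equilibria_def)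
    then show ?thesis by blast
  next
    case True
    then obtain i where i: "i \<in> V" "x i = - s i" "0 \<le> s i * local_field V W h x i"
      by blast
    have "x i \<noteq> 0"
      using i(2) signs[of i] by auto
    have flip: "x(i := - x i) = x(i := s i)"
      using i(2) by simp
    have "br_step V W h x (x(i := s i))"
      using i flip br_step_flip[of W x V i h, OF assms(2) less.prems(1) i(1)] by simp
    moreover obtain y where "(br_step V W h)\<^sup>*\<^sup>* (x(i := s i)) y" "y \<in> nash_equilibria V W h"
      using less.hyps[OF card_agreeing_flip_less[of V i x "\<lambda>j. - s j", OF assms(1) i(1,2) \<open>x i \<noteq> 0\<close>, unfolded flip]]
        flip_in_profiles[OF less.prems(1) i(1), unfolded flip]
        content_at_signs_flip_to_sign[OF assms(1-3) less.prems(2) i] by blast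
    ultimately show ?thesis
      by (meson converse_rtranclp_into_rtranclp)
  qed
qed

theorem proposition3:
  fixes V :: "'v set" and W :: "'v \<Rightarrow> 'v \<Rightarrow> real" and h :: "'v \<Rightarrow> real"
  assumes "network V W"
    and "structurally_balanced V W"
  shows "globally_BR_reachable V W h (nash_equilibria V W h)"
  unfolding globally_BR_reachable_def
proof
  fix x assume x: "x \<in> profiles V"
  have fin: "finite V" and diag: "\<forall>i. W i i = 0"
    using assms(1) by (auto simp: network_def)
  obtain s where s: "balancing_signs W s"
    using structurally_balanced_balancing_signs[OF assms] .
  obtain y where xy: "(br_step V W h)\<^sup>*\<^sup>* x y" and y: "y \<in> profiles V" "content_at_signs V W h s y"
    using reach_content_at_signs[of V W s x h, OF fin diag _ x] s by (auto simp: balancing_signs_def)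
  obtain z where "(br_step V W h)\<^sup>*\<^sup>* y z" "z \<in> nash_equilibria V W h"
    using reach_nash_from_content_at_signs[OF fin diag s y] by blast
  with xy have "(br_step V W h)\<^sup>*\<^sup>* x z" "z \<in> nash_equilibria V W h"
    by auto
  then show "\<exists>l p. br_path V W h l p \<and> p 0 = x \<and> p l \<in> nash_equilibria V W h"
    using br_path_of_rtranclp by blast
qed

end
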